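(* Let $\Sigma$ be a set and let $A\in\mathrm{Abs}(\wp(\Sigma))$ be given by the Galois insertion $(\alpha,\wp(\Sigma),A,\gamma)$. The following are equivalent: (1) $A$ is partitioning; (2) $\gamma$ is additive and $\{\gamma(\alpha(\{s\}))\}_{s\in\Sigma}$ is a partition of $\Sigma$ (and in this case $\mathrm{par}(A)=\{\gamma(\alpha(\{s\}))\}_{s\in\Sigma}$); (3) $A$ is forward complete for the complement operator $\complement:\wp(\Sigma)\to\wp(\Sigma)$, $\complement(S)=\Sigma\setminus S$.
   Context: An abstract domain of $\wp(\Sigma)_\subseteq$ is a complete lattice $A$ with a Galois insertion $(\alpha,\wp(\Sigma),A,\gamma)$: monotone maps with $\alpha(S)\le_A a\iff S\subseteq\gamma(a)$ and $\alpha\circ\gamma=\mathrm{id}$; its closure is $\mu_A=\gamma\circ\alpha$, and domains are identified when their closures coincide ($\mathrm{Abs}(\wp(\Sigma))$). $\gamma$ is additive if it preserves arbitrary joins (unions). For a partition $P$ of $\Sigma$, $\mathrm{pad}(P)$ is the abstract domain whose closure is $S\mapsto\bigcup\{B\in P\mid B\cap S\ne\varnothing\}$; $A$ is partitioning if $\mu_A=\mathrm{pad}(P)$'s closure for some partition $P$. $\mathrm{par}(A)$ is the partition of $\Sigma$ into the classes of $s\equiv_A s'\iff\alpha(\{s\})=\alpha(\{s'\})$. $A$ is forward complete for a unary $f$ if $f\circ\mu_A=\mu_A\circ f\circ\mu_A$. *)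

theory Defs
  imports "HOL-Library.Disjoint_Sets"
begin

text \<open>Sigma is the universe of the type 'a; the abstract domain A is a complete
lattice of type 'b; (alpha, wp(Sigma), A, gamma) is a Galois insertion.\<close>

definition galois_insertion :: "('a set \<Rightarrow> 'b::complete_lattice) \<Rightarrow> ('b \<Rightarrow> 'a set) \<Rightarrow> bool" where
  "galois_insertion \<alpha> \<gamma> \<longleftrightarrow> mono \<alpha> \<and> mono \<gamma> \<and>
     (\<forall>S a. \<alpha> S \<le> a \<longleftrightarrow> S \<subseteq> \<gamma> a) \<and> \<alpha> \<circ> \<gamma> = id"

definition closure_of_gi :: "('a set \<Rightarrow> 'b) \<Rightarrow> ('b \<Rightarrow> 'a set) \<Rightarrow> 'a set \<Rightarrow> 'a set" where
  "closure_of_gi \<alpha> \<gamma> = \<gamma> \<circ> \<alpha>"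

definition pad_closure :: "'a set set \<Rightarrow> 'a set \<Rightarrow> 'a set" where
  "pad_closure P S = \<Union>{B \<in> P. B \<inter> S \<noteq> {}}"

definition partitioning :: "('a set \<Rightarrow> 'b) \<Rightarrow> ('b \<Rightarrow> 'a set) \<Rightarrow> bool" where
  "partitioning \<alpha> \<gamma> \<longleftrightarrow> (\<exists>P. partition_on UNIV P \<and> closure_of_gi \<alpha> \<gamma> = pad_closure P)"

definition additive :: "('b::complete_lattice \<Rightarrow> 'a set) \<Rightarrow> bool" where
  "additive \<gamma> \<longleftrightarrow> (\<forall>X. \<gamma> (Sup X) = \<Union>(\<gamma> ` X))"

definition par :: "('a set \<Rightarrow> 'b) \<Rightarrow> 'a set set" where
  "par \<alpha> = {{s'. \<alpha> {s'} = \<alpha> {s}} | s. True}"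

definition forward_complete :: "('a set \<Rightarrow> 'b) \<Rightarrow> ('b \<Rightarrow> 'a set) \<Rightarrow> ('a set \<Rightarrow> 'a set) \<Rightarrow> bool" where
  "forward_complete \<alpha> \<gamma> f \<longleftrightarrow>
     f \<circ> closure_of_gi \<alpha> \<gamma> = closure_of_gi \<alpha> \<gamma> \<circ> f \<circ> closure_of_gi \<alpha> \<gamma>"

end

theory Submission
  imports Defs
begin

text \<open>Write \<open>\<mu> = \<gamma> \<circ> \<alpha>\<close>. Since \<open>\<alpha>\<close> is a left adjoint, \<open>\<gamma>\<close> is additive iff \<open>\<mu>\<close> preserves
  unions; a union-preserving \<open>\<mu>\<close> is determined by the sets \<open>\<mu> {s}\<close>, and it is \<open>pad(P)\<close> exactly
  when these form the partition \<open>P\<close>. The complement of a union of blocks is a union of blocks,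
  so partitioning domains are complete for complement. Conversely, if the \<open>\<mu>\<close>-closed sets,
  which are closed under intersections, are closed under complement, they are closed under
  unions as well; and \<open>x \<in> \<mu> {s}\<close> forces \<open>s \<in> \<mu> {x}\<close>, since otherwise \<open>\<mu> {s} - \<mu> {x}\<close>
  would be a closed set containing \<open>s\<close> but not \<open>x\<close>. Hence the \<open>\<mu> {s}\<close> form a partition.\<close>

lemma partition_on_block_eq:
  assumes "partition_on A P" "p \<in> P" "q \<in> P" "x \<in> p" "x \<in> q"
  shows "p = q"
  using assms unfolding partition_on_def pairwise_def disjnt_def by blast

lemma partition_on_UNIV_blockE:
  assumes "partition_on UNIV P"
  obtains B where "B \<in> P" "x \<in> B"
  using partition_onD1[OF assms] by (metis UNIV_I UnionE)

lemma mem_pad_closure_iff: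
  assumes "partition_on A P" "B \<in> P" "x \<in> B"
  shows "x \<in> pad_closure P S \<longleftrightarrow> B \<inter> S \<noteq> {}"
  using assms partition_on_block_eq[OF assms(1)] unfolding pad_closure_def by blast

lemma pad_closure_singleton:
  assumes "partition_on UNIV P" "B \<in> P" "s \<in> B"
  shows "pad_closure P {s} = B"
proof -
  have "x \<in> pad_closure P {s} \<longleftrightarrow> x \<in> B" for x
  proof -
    obtain B' where B': "B' \<in> P" "x \<in> B'"
      using partition_on_UNIV_blockE[OF assms(1)] .
    have "x \<in> pad_closure P {s} \<longleftrightarrow> s \<in> B'"
      using mem_pad_closure_iff[OF assms(1) B'] by blast
    also have "\<dots> \<longleftrightarrow> x \<in> B"
      using assms B' partition_on_block_eq[OF assms(1)] by blast
    finally show ?thesis .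
  qed
  then show ?thesis
    by blast
qed

lemma pad_closure_Union: "pad_closure P (\<Union>F) = \<Union>(pad_closure P ` F)"
  unfolding pad_closure_def by blast

lemma pad_closure_Compl:
  assumes "partition_on UNIV P"
  shows "pad_closure P (- pad_closure P S) = - pad_closure P S"
proof -
  have "x \<in> pad_closure P (- pad_closure P S) \<longleftrightarrow> x \<notin> pad_closure P S" for x
  proof -
    obtain B where B: "B \<in> P" "x \<in> B"
      using partition_on_UNIV_blockE[OF assms] .
    have block_iff: "y \<in> pad_closure P S \<longleftrightarrow> B \<inter> S \<noteq> {}" if "y \<in> B" for y
      using mem_pad_closure_iff[OF assms B(1) that] .
    have "x \<in> pad_closure P (- pad_closure P S) \<longleftrightarrow> B \<inter> - pad_closure P S \<noteq> {}"
      using mem_pad_closure_iff[OF assms B] .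
    also have "\<dots> \<longleftrightarrow> B \<inter> S = {}"
      using block_iff B(2) by blast
    also have "\<dots> \<longleftrightarrow> x \<notin> pad_closure P S"
      using block_iff[OF B(2)] by blast
    finally show ?thesis .
  qed
  then show ?thesis
    by blast
qed

lemma pad_closure_eq_UN_blocks:
  assumes "partition_on UNIV P" and "\<And>s. s \<in> f s \<and> f s \<in> P"
  shows "pad_closure P S = (\<Union>s\<in>S. f s)"
proof -
  have "x \<in> pad_closure P S \<longleftrightarrow> (\<exists>s\<in>S. x \<in> f s)" for x
  proof -
    have same_block: "y \<in> f x \<longleftrightarrow> x \<in> f y" for y
      by (metis assms partition_on_block_eq)
    have "x \<in> pad_closure P S \<longleftrightarrow> f x \<inter> S \<noteq> {}"
      using mem_pad_closure_iff[OF assms(1)] assms(2) by metis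
    then show ?thesis
      using same_block by blast
  qed
  then show ?thesis
    by blast
qed

locale abstract_domain =
  fixes \<alpha> :: "'a set \<Rightarrow> 'b::complete_lattice" and \<gamma> :: "'b \<Rightarrow> 'a set"
  assumes galois_insertion: "galois_insertion \<alpha> \<gamma>"
begin

abbreviation \<mu> :: "'a set \<Rightarrow> 'a set" where
  "\<mu> S \<equiv> \<gamma> (\<alpha> S)"

abbreviation point_closures :: "'a set set" where
  "point_closures \<equiv> range (\<lambda>s. \<mu> {s})"

lemma alpha_le_iff: "\<alpha> S \<le> a \<longleftrightarrow> S \<subseteq> \<gamma> a"
  using galois_insertion unfolding galois_insertion_def by blast

lemma alpha_gamma [simp]: "\<alpha> (\<gamma> a) = a"
  using galois_insertion unfolding galois_insertion_def by (metis comp_apply id_apply)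

lemma closure_extensive: "S \<subseteq> \<mu> S"
  using alpha_le_iff by blast

lemma closure_least: "S \<subseteq> \<mu> T \<Longrightarrow> \<mu> S \<subseteq> \<mu> T"
  using alpha_le_iff by (metis alpha_gamma)

lemma closure_mono: "S \<subseteq> T \<Longrightarrow> \<mu> S \<subseteq> \<mu> T"
  using closure_extensive closure_least by blast

lemma closure_Inter_closed:
  assumes "\<And>T. T \<in> G \<Longrightarrow> \<mu> T = T"
  shows "\<mu> (\<Inter>G) = \<Inter>G"
  using assms closure_mono[of "\<Inter>G"] closure_extensive[of "\<Inter>G"] by blast

lemma alpha_Union: "\<alpha> (\<Union>F) = Sup (\<alpha> ` F)"
proof (rule antisym)
  have "S \<subseteq> \<gamma> (Sup (\<alpha> ` F))" if "S \<in> F" for S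
    using that alpha_le_iff by (blast intro: Sup_upper)
  then show "\<alpha> (\<Union>F) \<le> Sup (\<alpha> ` F)"
    unfolding alpha_le_iff by blast
  have "\<alpha> S \<le> \<alpha> (\<Union>F)" if "S \<in> F" for S
    using that alpha_le_iff closure_extensive by blast
  then show "Sup (\<alpha> ` F) \<le> \<alpha> (\<Union>F)"
    by (blast intro: Sup_least)
qed

lemma additive_iff_closure_Union:
  "additive \<gamma> \<longleftrightarrow> (\<forall>F. \<mu> (\<Union>F) = (\<Union>S\<in>F. \<mu> S))"
proof
  assume "additive \<gamma>"
  then show "\<forall>F. \<mu> (\<Union>F) = (\<Union>S\<in>F. \<mu> S)"
    unfolding additive_def by (simp add: alpha_Union image_image)
next
  assume closure_Union: "\<forall>F. \<mu> (\<Union>F) = (\<Union>S\<in>F. \<mu> S)"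
  show "additive \<gamma>"
    unfolding additive_def
  proof
    fix X :: "'b set"
    have "\<gamma> (Sup X) = \<mu> (\<Union>(\<gamma> ` X))"
      by (simp add: alpha_Union image_image)
    also have "\<dots> = \<Union>(\<gamma> ` X)"
      using closure_Union by (simp add: image_image)
    finally show "\<gamma> (Sup X) = \<Union>(\<gamma> ` X)" .
  qed
qed

lemma closure_eq_UN_singletons:
  assumes "additive \<gamma>"
  shows "\<mu> S = (\<Union>s\<in>S. \<mu> {s})"
proof -
  have "\<mu> (\<Union>((\<lambda>s. {s}) ` S)) = (\<Union>T\<in>(\<lambda>s. {s}) ` S. \<mu> T)"
    using assms unfolding additive_iff_closure_Union by blast
  then show ?thesis
    by (simp add: image_image)
qed

lemma partition_on_point_closures_iff:
  "partition_on UNIV point_closures \<longleftrightarrow> (\<forall>s x. x \<in> \<mu> {s} \<longrightarrow> \<mu> {x} = \<mu> {s})"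
proof
  assume partition: "partition_on UNIV point_closures"
  show "\<forall>s x. x \<in> \<mu> {s} \<longrightarrow> \<mu> {x} = \<mu> {s}"
  proof (intro allI impI)
    fix s x
    assume "x \<in> \<mu> {s}"
    moreover have "x \<in> \<mu> {x}"
      using closure_extensive by blast
    ultimately show "\<mu> {x} = \<mu> {s}"
      by (intro partition_on_block_eq[OF partition]) auto
  qed
next
  assume block_eq: "\<forall>s x. x \<in> \<mu> {s} \<longrightarrow> \<mu> {x} = \<mu> {s}"
  show "partition_on UNIV point_closures"
  proof (rule partition_onI)
    show "\<Union>point_closures = UNIV" and "{} \<notin> point_closures"
      using closure_extensive by blast+
    fix p q
    assume "p \<in> point_closures" "q \<in> point_closures" "p \<noteq> q"
    then obtain s t where "p = \<mu> {s}" "q = \<mu> {t}" "\<mu> {s} \<noteq> \<mu> {t}"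
      by blast
    then show "disjnt p q"
      using block_eq unfolding disjnt_def by (metis disjoint_iff)
  qed
qed

lemma par_eq_point_closures:
  assumes "partition_on UNIV point_closures"
  shows "par \<alpha> = point_closures"
proof -
  have "\<alpha> {x} = \<alpha> {s} \<longleftrightarrow> x \<in> \<mu> {s}" for x s
  proof
    assume "\<alpha> {x} = \<alpha> {s}"
    then show "x \<in> \<mu> {s}"
      using closure_extensive[of "{x}"] by simp
  next
    assume "x \<in> \<mu> {s}"
    then have "\<alpha> (\<mu> {x}) = \<alpha> (\<mu> {s})"
      using assms unfolding partition_on_point_closures_iff by simp
    then show "\<alpha> {x} = \<alpha> {s}"
      by simp
  qed
  then show ?thesis
    unfolding par_def by auto
qed

lemma partitioning_iff:
  "partitioning \<alpha> \<gamma> \<longleftrightarrow> (\<exists>P. partition_on UNIV P \<and> (\<forall>S. \<mu> S = pad_closure P S))"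
  unfolding partitioning_def closure_of_gi_def by (simp add: fun_eq_iff)

lemma partitioning_iff_additive_partition:
  "partitioning \<alpha> \<gamma> \<longleftrightarrow> additive \<gamma> \<and> partition_on UNIV point_closures"
proof
  assume "partitioning \<alpha> \<gamma>"
  then obtain P where P: "partition_on UNIV P" and \<mu>_eq: "\<And>S. \<mu> S = pad_closure P S"
    unfolding partitioning_iff by blast
  have block: "\<mu> {s} \<in> P \<and> s \<in> \<mu> {s}" for s
  proof -
    obtain B where "B \<in> P" "s \<in> B"
      using partition_on_UNIV_blockE[OF P] .
    then show ?thesis
      using pad_closure_singleton[OF P] \<mu>_eq by simp
  qed
  have "P \<subseteq> point_closures"
  proof
    fix B assume "B \<in> P"
    moreover obtain s where "s \<in> B"
      using \<open>B \<in> P\<close> partition_onD3[OF P] by (metis ex_in_conv)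
    ultimately show "B \<in> point_closures"
      using block partition_on_block_eq[OF P] by blast
  qed
  with block have "point_closures = P"
    by blast
  moreover have "additive \<gamma>"
    unfolding additive_iff_closure_Union by (simp only: \<mu>_eq pad_closure_Union simp_thms)
  ultimately show "additive \<gamma> \<and> partition_on UNIV point_closures"
    using P by simp
next
  assume "additive \<gamma> \<and> partition_on UNIV point_closures"
  then have additive: "additive \<gamma>" and partition: "partition_on UNIV point_closures"
    by simp_all
  have "\<mu> S = pad_closure point_closures S" for S
  proof -
    have "\<mu> S = (\<Union>s\<in>S. \<mu> {s})"
      by (rule closure_eq_UN_singletons[OF additive])
    also have "\<dots> = pad_closure point_closures S"
      using closure_extensive by (intro pad_closure_eq_UN_blocks[OF partition, symmetric]) blast
    finally show ?thesis .
  qed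
  with partition show "partitioning \<alpha> \<gamma>"
    unfolding partitioning_iff by blast
qed

lemma forward_complete_uminus_iff:
  "forward_complete \<alpha> \<gamma> uminus \<longleftrightarrow> (\<forall>S. \<mu> (- \<mu> S) = - \<mu> S)"
  unfolding forward_complete_def closure_of_gi_def by (auto simp: fun_eq_iff)

context
  assumes Compl_closed: "\<And>S. \<mu> (- \<mu> S) = - \<mu> S"
begin

lemma closure_Union_if_Compl_closed: "\<mu> (\<Union>F) = (\<Union>S\<in>F. \<mu> S)"
proof -
  let ?U = "\<Union>S\<in>F. \<mu> S"
  have "\<mu> (\<Inter>S\<in>F. - \<mu> S) = (\<Inter>S\<in>F. - \<mu> S)"
    by (rule closure_Inter_closed) (auto simp: Compl_closed)
  then have "\<mu> (- ?U) = - ?U"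
    by simp
  then have "\<mu> ?U = ?U"
    using Compl_closed[of "- ?U"] by simp
  moreover have "\<Union>F \<subseteq> ?U"
    using closure_extensive by blast
  ultimately have "\<mu> (\<Union>F) \<subseteq> ?U"
    using closure_least by metis
  moreover have "?U \<subseteq> \<mu> (\<Union>F)"
    using closure_mono by blast
  ultimately show ?thesis
    by blast
qed

lemma point_closure_sym_if_Compl_closed:
  assumes "x \<in> \<mu> {s}"
  shows "s \<in> \<mu> {x}"
proof (rule ccontr)
  assume "s \<notin> \<mu> {x}"
  let ?D = "\<mu> {s} \<inter> - \<mu> {x}"
  have "\<mu> (\<Inter>{\<mu> {s}, - \<mu> {x}}) = \<Inter>{\<mu> {s}, - \<mu> {x}}"
    by (rule closure_Inter_closed) (auto simp: Compl_closed)
  then have "\<mu> ?D = ?D"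
    by simp
  moreover have "{s} \<subseteq> ?D"
    using \<open>s \<notin> \<mu> {x}\<close> closure_extensive by blast
  ultimately have "\<mu> {s} \<subseteq> ?D"
    using closure_least by metis
  then show False
    using assms closure_extensive by blast
qed

lemma partition_on_point_closures_if_Compl_closed: "partition_on UNIV point_closures"
  unfolding partition_on_point_closures_iff
proof (intro allI impI)
  fix s x
  assume "x \<in> \<mu> {s}"
  then have "\<mu> {x} \<subseteq> \<mu> {s}" and "\<mu> {s} \<subseteq> \<mu> {x}"
    using point_closure_sym_if_Compl_closed closure_least by simp_all
  then show "\<mu> {x} = \<mu> {s}"
    by (rule subset_antisym)
qed

end

lemma forward_complete_uminus_iff_partitioning:
  "forward_complete \<alpha> \<gamma> uminus \<longleftrightarrow> partitioning \<alpha> \<gamma>"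
proof
  assume "forward_complete \<alpha> \<gamma> uminus"
  then show "partitioning \<alpha> \<gamma>"
    unfolding forward_complete_uminus_iff partitioning_iff_additive_partition
      additive_iff_closure_Union
    using closure_Union_if_Compl_closed partition_on_point_closures_if_Compl_closed by blast
next
  assume "partitioning \<alpha> \<gamma>"
  then obtain P where "partition_on UNIV P" and "\<And>S. \<mu> S = pad_closure P S"
    unfolding partitioning_iff by blast
  then show "forward_complete \<alpha> \<gamma> uminus"
    unfolding forward_complete_uminus_iff by (simp add: pad_closure_Compl)
qed

end

theorem corollary3p2:
  fixes \<alpha> :: "'a set \<Rightarrow> 'b::complete_lattice" and \<gamma> :: "'b \<Rightarrow> 'a set"
  assumes "galois_insertion \<alpha> \<gamma>"
  shows "(partitioning \<alpha> \<gamma> \<longleftrightarrow>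
            additive \<gamma> \<and> partition_on UNIV (range (\<lambda>s. \<gamma> (\<alpha> {s})))) \<and>
         (additive \<gamma> \<and> partition_on UNIV (range (\<lambda>s. \<gamma> (\<alpha> {s})))
            \<longrightarrow> par \<alpha> = range (\<lambda>s. \<gamma> (\<alpha> {s}))) \<and>
         (partitioning \<alpha> \<gamma> \<longleftrightarrow> forward_complete \<alpha> \<gamma> uminus)"
proof -
  interpret abstract_domain \<alpha> \<gamma>
    using assms by unfold_locales
  show ?thesis
    using partitioning_iff_additive_partition par_eq_point_closures
      forward_complete_uminus_iff_partitioning by blast
qed

end
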